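(* Let $n\in\mathbb N$ and let $T:\mathbb C_n[z]\to\mathbb C[z]$ be a linear operator. Then $T$ preserves stability (i.e. $T(f)\in\mathcal H_1(\mathbb C)\cup\{0\}$ for every $f\in\mathcal H_1(\mathbb C)\cap\mathbb C_n[z]$) if and only if either (a) $T$ has range of dimension at most one and $T(f)=\alpha(f)P$ for $f\in\mathbb C_n[z]$, where $\alpha:\mathbb C_n[z]\to\mathbb C$ is a linear functional and $P\in\mathcal H_1(\mathbb C)$; or (b) $T[(z+w)^n]\in\mathcal H_2(\mathbb C)$.
   Context: $\mathbb C_n[z]$ is the space of complex polynomials of degree at most $n$. A polynomial $f\in\mathbb C[z_1,\dots,z_k]$ is stable if it is non-zero and $f(z_1,\dots,z_k)\neq0$ whenever $\Im z_j>0$ for all $j$; $\mathcal H_k(\mathbb C)$ denotes the set of stable polynomials in $k$ variables. $T$ is extended to polynomials in $z,w$ by $T(z^kw^\ell)=T(z^k)w^\ell$. *)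

theory Defs
  imports Complex_Main "HOL-Computational_Algebra.Polynomial"
begin

definition stable1 :: "complex poly \<Rightarrow> bool" where
  "stable1 p \<longleftrightarrow> p \<noteq> 0 \<and> (\<forall>z. Im z > 0 \<longrightarrow> poly p z \<noteq> 0)"

text \<open>Bivariate polynomials in z,w are represented as elements of C[z][w]:
  a polynomial in w whose coefficients are polynomials in z.\<close>
definition eval2 :: "complex poly poly \<Rightarrow> complex \<Rightarrow> complex \<Rightarrow> complex" where
  "eval2 p z w = poly (map_poly (\<lambda>c. poly c z) p) w"

definition stable2 :: "complex poly poly \<Rightarrow> bool" where
  "stable2 p \<longleftrightarrow> p \<noteq> 0 \<and> (\<forall>z w. Im z > 0 \<longrightarrow> Im w > 0 \<longrightarrow> eval2 p z w \<noteq> 0)"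

text \<open>Linearity of an operator C_n[z] -> C[z] (only its values on degree <= n matter).\<close>
definition linear_op_Cn :: "nat \<Rightarrow> (complex poly \<Rightarrow> complex poly) \<Rightarrow> bool" where
  "linear_op_Cn n T \<longleftrightarrow> (\<forall>f g a b. degree f \<le> n \<longrightarrow> degree g \<le> n \<longrightarrow>
      T (smult a f + smult b g) = smult a (T f) + smult b (T g))"

definition linear_fun_Cn :: "nat \<Rightarrow> (complex poly \<Rightarrow> complex) \<Rightarrow> bool" where
  "linear_fun_Cn n \<alpha> \<longleftrightarrow> (\<forall>f g a b. degree f \<le> n \<longrightarrow> degree g \<le> n \<longrightarrow>
      \<alpha> (smult a f + smult b g) = a * \<alpha> f + b * \<alpha> g)"

definition preserves_stability :: "nat \<Rightarrow> (complex poly \<Rightarrow> complex poly) \<Rightarrow> bool" where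
  "preserves_stability n T \<longleftrightarrow>
     (\<forall>f. stable1 f \<and> degree f \<le> n \<longrightarrow> stable1 (T f) \<or> T f = 0)"

text \<open>T[(z+w)^n] = sum_k (n choose k) T(z^k) w^(n-k), as an element of C[z][w].\<close>
definition symbol :: "nat \<Rightarrow> (complex poly \<Rightarrow> complex poly) \<Rightarrow> complex poly poly" where
  "symbol n T = (\<Sum>k\<le>n. monom (smult (of_nat (n choose k)) (T (monom 1 k))) (n - k))"

end

theory Submission
  imports Defs "HOL-Complex_Analysis.Complex_Analysis" "HOL-Computational_Algebra.Fundamental_Theorem_Algebra"
begin

text \<open>
  If \<open>T\<close> kills some \<open>(z + w)\<^sup>n\<close> with \<open>Im w > 0\<close>, then for every \<open>h\<close> of degree \<open>\<le> n\<close>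
  the polynomial \<open>(z + w)\<^sup>n + \<epsilon> h\<close> is stable for small \<open>\<epsilon> \<noteq> 0\<close> and is mapped to \<open>\<epsilon> T h\<close>,
  so \<open>T h\<close> is stable or zero.
  A linear space of polynomials that are all stable or zero has dimension at most one,
  since its elements are determined by their value at \<open>\<i>\<close>. Otherwise \<open>T((z + w)\<^sup>n)\<close> is
  stable for every \<open>w\<close> in the upper half-plane, which is the stability of the symbol.

  Conversely, let the symbol be stable. Up to the factor \<open>n + 1\<close>, the polar derivative of
  \<open>\<Sum>\<^sub>k (n+1 choose k) t\<^sub>k w^(n+1-k)\<close> with respect to \<open>-a\<close> is the corresponding polynomial for
  the sequence \<open>t\<^sub>k\<^sub>+\<^sub>1 - a t\<^sub>k\<close>, and Laguerre's theorem keeps it stable when \<open>Im a < 0\<close>.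
  Induction on \<open>n\<close> then gives a Grace-type theorem: \<open>T\<close> maps every product of \<open>n\<close> linear
  factors with roots in the open lower half-plane to a stable polynomial. Each stable \<open>f\<close> of
  degree \<open>\<le> n\<close> is a coefficientwise limit of multiples of such products (push the roots down
  and add roots escaping to infinity), and Hurwitz's theorem carries stability over to \<open>T f\<close>.
\<close>

section \<open>Linear operators on \<open>\<complex>\<^sub>n[z]\<close> and their symbol\<close>

lemma linear_op_Cn_zero:
  assumes "linear_op_Cn n T"
  shows "T 0 = 0"
proof -
  have "T (smult 0 0 + smult 0 0) = smult 0 (T 0) + smult 0 (T 0)"
    using assms unfolding linear_op_Cn_def by (metis degree_0 le0)
  then show ?thesis by simp
qed

lemma linear_op_Cn_add:
  assumes "linear_op_Cn n T" "degree f \<le> n" "degree g \<le> n"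
  shows "T (f + g) = T f + T g"
  using assms unfolding linear_op_Cn_def by (metis smult_1_left)

lemma linear_op_Cn_smult:
  assumes "linear_op_Cn n T" "degree f \<le> n"
  shows "T (smult a f) = smult a (T f)"
proof -
  have "T (smult a f + smult 0 f) = smult a (T f) + smult 0 (T f)"
    using assms unfolding linear_op_Cn_def by blast
  then show ?thesis by simp
qed

lemma linear_op_Cn_sum:
  assumes "linear_op_Cn n T" "finite A" "\<And>k. k \<in> A \<Longrightarrow> degree (p k) \<le> n"
  shows "T (\<Sum>k\<in>A. p k) = (\<Sum>k\<in>A. T (p k))"
  using assms(2,3)
proof (induction A rule: finite_induct)
  case empty
  then show ?case using linear_op_Cn_zero[OF assms(1)] by simp
next
  case (insert x F)
  have "degree (\<Sum>k\<in>F. p k) \<le> n"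
    using insert by (intro degree_sum_le) auto
  then show ?case
    using insert linear_op_Cn_add[OF assms(1)] by simp
qed

lemma linear_op_Cn_expand:
  assumes "linear_op_Cn n T" "degree f \<le> n"
  shows "T f = (\<Sum>k\<le>n. smult (coeff f k) (T (monom 1 k)))"
proof -
  have "T f = T (\<Sum>k\<le>n. smult (coeff f k) (monom 1 k))"
    using poly_as_sum_of_monoms'[OF assms(2)] by (simp add: smult_monom)
  also have "\<dots> = (\<Sum>k\<le>n. T (smult (coeff f k) (monom 1 k)))"
    by (rule linear_op_Cn_sum[OF assms(1)])
       (auto simp: smult_monom intro: order.trans[OF degree_monom_le])
  also have "\<dots> = (\<Sum>k\<le>n. smult (coeff f k) (T (monom 1 k)))"
    by (intro sum.cong refl linear_op_Cn_smult[OF assms(1)]) (simp add: degree_monom_eq)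
  finally show ?thesis .
qed

definition coeff_pairing :: "nat \<Rightarrow> 'a::comm_semiring_0 poly \<Rightarrow> (nat \<Rightarrow> 'a) \<Rightarrow> 'a" where
  "coeff_pairing n p t = (\<Sum>k\<le>n. coeff p k * t k)"

lemma poly_linear_op_Cn:
  assumes "linear_op_Cn n T" "degree f \<le> n"
  shows "poly (T f) z = coeff_pairing n f (\<lambda>k. poly (T (monom 1 k)) z)"
  unfolding coeff_pairing_def by (subst linear_op_Cn_expand[OF assms]) (simp add: poly_sum)

definition binom_poly :: "nat \<Rightarrow> (nat \<Rightarrow> 'a::comm_ring_1) \<Rightarrow> 'a poly" where
  "binom_poly n t = (\<Sum>k\<le>n. monom (of_nat (n choose k) * t k) (n - k))"

lemma coeff_binom_poly:
  "coeff (binom_poly n t) j = (if j \<le> n then of_nat (n choose j) * t (n - j) else 0)"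
proof (cases "j \<le> n")
  case True
  have "coeff (binom_poly n t) j = (\<Sum>k\<le>n. if k = n - j then of_nat (n choose k) * t k else 0)"
    unfolding binom_poly_def coeff_sum coeff_monom using True by (intro sum.cong) auto
  then show ?thesis
    using True by (simp add: binomial_symmetric[OF True])
next
  case False
  then show ?thesis
    by (auto simp: binom_poly_def coeff_sum coeff_monom intro!: sum.neutral)
qed

lemma degree_binom_poly_le: "degree (binom_poly n t) \<le> n"
  by (rule degree_le) (simp add: coeff_binom_poly)

lemma poly_binom_poly: "poly (binom_poly n t) w = (\<Sum>k\<le>n. of_nat (n choose k) * t k * w ^ (n - k))"
  by (simp add: binom_poly_def poly_sum poly_monom)

lemma symbol_eq_binom_poly: "symbol n T = binom_poly n (\<lambda>k. T (monom 1 k))"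
  by (simp add: symbol_def binom_poly_def of_nat_poly)

lemma eval2_symbol: "eval2 (symbol n T) z w = poly (binom_poly n (\<lambda>k. poly (T (monom 1 k)) z)) w"
proof -
  have "map_poly (\<lambda>c. poly c z) (symbol n T) = binom_poly n (\<lambda>k. poly (T (monom 1 k)) z)"
    by (rule poly_eqI) (simp add: coeff_map_poly symbol_eq_binom_poly coeff_binom_poly)
  then show ?thesis
    by (simp add: eval2_def)
qed

lemma poly_linear_op_Cn_linear_power:
  assumes "linear_op_Cn n T"
  shows "poly (T ([:w, 1:] ^ n)) z = eval2 (symbol n T) z w"
  unfolding eval2_symbol poly_binom_poly poly_linear_op_Cn[OF assms degree_linear_power[THEN eq_refl]]
    coeff_pairing_def
  by (intro sum.cong refl) (simp add: coeff_linear_poly_power)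

section \<open>Stable polynomials and Laguerre's theorem\<close>

lemma stable1_iff_nonvanishing: "stable1 p \<longleftrightarrow> (\<forall>z. Im z > 0 \<longrightarrow> poly p z \<noteq> 0)"
  unfolding stable1_def by (metis imaginary_unit.sel(2) poly_0 zero_less_one)

lemma stable1_smult_iff: "stable1 (smult c p) \<longleftrightarrow> c \<noteq> 0 \<and> stable1 p"
  unfolding stable1_def by auto

lemma stable1_linear_power:
  assumes "Im w > 0"
  shows "stable1 ([:w, 1:] ^ n)"
proof -
  have "w + z \<noteq> 0" if "Im z > 0" for z
    using assms that by (metis add_pos_pos less_irrefl plus_complex.sel(2) zero_complex.sel(2))
  then show ?thesis
    by (simp add: stable1_iff_nonvanishing)
qed

lemma stable1_factorization:
  assumes "stable1 p"
  obtains R where "size R = degree p" "p = smult (lead_coeff p) (\<Prod>x\<in>#R. [:-x, 1:])"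
    "\<forall>r\<in>#R. Im r \<le> 0"
proof -
  have "p \<noteq> 0"
    using assms by (simp add: stable1_def)
  then obtain R where R: "size R = degree p" "p = smult (lead_coeff p) (\<Prod>x\<in>#R. [:-x, 1:])"
    using alg_closed_imp_factorization[of p] by blast
  have "Im r \<le> 0" if r: "r \<in># R" for r
  proof -
    obtain R' where "R = add_mset r R'"
      using r by (meson multi_member_split)
    then have "poly p r = 0"
      by (subst R(2)) simp
    then show ?thesis
      using assms unfolding stable1_def by (meson not_le)
  qed
  then show ?thesis
    using that[OF R] by blast
qed

lemma degree_prod_linear_factors_le: "degree (\<Prod>a\<in>#A. [:-a, 1:] :: 'a::comm_ring_1 poly) \<le> size A"
proof (induction A)
  case (add x A)
  have "degree ([:-x, 1:] * (\<Prod>a\<in>#A. [:-a, 1:])) \<le> degree [:-x, 1::'a:] + degree (\<Prod>a\<in>#A. [:-a, 1:])"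
    by (rule degree_mult_le)
  with add show ?case
    by simp
qed simp

lemma convex_lower_tangent_disk:
  assumes "h > 0"
  shows "convex {u::complex. h * (cmod u)\<^sup>2 + Im u \<le> 0}"
proof -
  define c where "c = Complex 0 (- 1 / (2 * h))"
  have disk: "dist u c \<le> 1 / (2 * h) \<longleftrightarrow> h * (cmod u)\<^sup>2 + Im u \<le> 0" for u
  proof -
    have "(dist u c)\<^sup>2 = (Re u)\<^sup>2 + (Im u + 1 / (2 * h))\<^sup>2"
      by (simp add: c_def dist_norm cmod_power2)
    also have "(Im u + 1 / (2 * h))\<^sup>2 = (Im u)\<^sup>2 + Im u / h + (1 / (2 * h))\<^sup>2"
      using assms by (simp add: power2_sum)
    also have "(Re u)\<^sup>2 + ((Im u)\<^sup>2 + Im u / h + (1 / (2 * h))\<^sup>2) =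
        (h * (cmod u)\<^sup>2 + Im u) / h + (1 / (2 * h))\<^sup>2"
      using assms by (simp add: cmod_power2 add_divide_distrib)
    finally have sq: "(dist u c)\<^sup>2 = (h * (cmod u)\<^sup>2 + Im u) / h + (1 / (2 * h))\<^sup>2" .
    have "dist u c \<le> 1 / (2 * h) \<longleftrightarrow> (dist u c)\<^sup>2 \<le> (1 / (2 * h))\<^sup>2"
      using assms by (simp add: power2_le_iff_abs_le)
    also have "\<dots> \<longleftrightarrow> (h * (cmod u)\<^sup>2 + Im u) / h \<le> 0"
      unfolding sq by simp
    also have "\<dots> \<longleftrightarrow> h * (cmod u)\<^sup>2 + Im u \<le> 0"
      using assms by (simp add: divide_le_0_iff)
    finally show ?thesis .
  qed
  have "{u::complex. h * (cmod u)\<^sup>2 + Im u \<le> 0} = cball c (1 / (2 * h))"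
    unfolding set_eq_iff mem_Collect_eq mem_cball dist_commute[of c] disk by simp
  then show ?thesis
    by simp
qed

lemma inverse_in_lower_tangent_disk_iff:
  fixes y :: complex
  assumes "y \<noteq> 0"
  shows "h * (cmod (1 / y))\<^sup>2 + Im (1 / y) \<le> 0 \<longleftrightarrow> h \<le> Im y"
proof -
  have "(cmod y)\<^sup>2 > 0"
    using assms by simp
  moreover have "h * (cmod (1 / y))\<^sup>2 + Im (1 / y) = (h - Im y) / (cmod y)\<^sup>2"
    by (simp add: norm_divide Im_divide cmod_power2 power_divide diff_divide_distrib)
  ultimately show ?thesis
    by (simp add: divide_le_0_iff)
qed

lemma sum_mset_in_scaled_convex:
  fixes C :: "'a::real_vector set"
  assumes "convex C" "0 \<in> C" "\<forall>x\<in>#X. x \<in> C" "size X \<le> m"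
  shows "sum_mset X \<in> (\<lambda>x. real m *\<^sub>R x) ` C"
  using assms(3,4)
proof (induction X arbitrary: m)
  case empty
  then show ?case using assms(2) by force
next
  case (add x X)
  then obtain m' where m: "m = Suc m'" and "size X \<le> m'"
    by (cases m) auto
  with add obtain c where c: "c \<in> C" "sum_mset X = real m' *\<^sub>R c"
    by auto
  have "(1 / real m) *\<^sub>R x + (real m' / real m) *\<^sub>R c \<in> C"
    using convexD[OF assms(1)] add.prems c m by (simp add: add_divide_distrib[symmetric])
  moreover have "sum_mset (add_mset x X) = real m *\<^sub>R ((1 / real m) *\<^sub>R x + (real m' / real m) *\<^sub>R c)"
    using c m by (simp add: scaleR_add_right)
  ultimately show ?case
    by blast
qed

lemma poly_pderiv_prod_linear_factors:
  fixes w :: "'a::field"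
  assumes "\<forall>r\<in>#R. w \<noteq> r"
  shows "poly (pderiv (\<Prod>r\<in>#R. [:-r, 1:])) w = poly (\<Prod>r\<in>#R. [:-r, 1:]) w * (\<Sum>r\<in>#R. 1 / (w - r))"
  using assms
proof (induction R)
  case empty
  then show ?case by simp
next
  case (add a R)
  define P where "P = (\<Prod>r\<in>#R. [:-r, 1:])"
  have "pderiv [:-a, 1:] = 1"
    by (simp add: pderiv_pCons)
  then have deriv: "poly (pderiv ([:-a, 1:] * P)) w = (w - a) * poly (pderiv P) w + poly P w"
    unfolding pderiv_mult by (simp add: algebra_simps)
  have "w - a \<noteq> 0" "poly (pderiv P) w = poly P w * (\<Sum>r\<in>#R. 1 / (w - r))"
    using add by (simp_all add: P_def)
  moreover have prod: "(\<Prod>r\<in>#add_mset a R. [:-r, 1:]) = [:-a, 1:] * P"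
    by (simp add: P_def)
  ultimately show ?case
    unfolding prod deriv by (simp add: field_simps)
qed

lemma sum_inverse_in_scaled_lower_tangent_disk:
  fixes w :: complex
  assumes "Im w > 0" "\<forall>r\<in>#R. Im r \<le> 0" "size R \<le> n"
  obtains u where "Im w * (cmod u)\<^sup>2 + Im u \<le> 0" "(\<Sum>r\<in>#R. 1 / (w - r)) = of_nat n * u"
proof -
  define D where "D = {u::complex. Im w * (cmod u)\<^sup>2 + Im u \<le> 0}"
  have "(\<Sum>r\<in>#R. 1 / (w - r)) \<in> (\<lambda>u. real n *\<^sub>R u) ` D"
  proof (rule sum_mset_in_scaled_convex)
    show "convex D"
      unfolding D_def using assms(1) by (rule convex_lower_tangent_disk)
    have "1 / (w - r) \<in> D" if r: "r \<in># R" for r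
    proof -
      have "Im w \<le> Im (w - r)"
        using assms(2) r by auto
      moreover from this have "w - r \<noteq> 0"
        using assms(1) by auto
      ultimately show ?thesis
        by (simp add: D_def inverse_in_lower_tangent_disk_iff)
    qed
    then show "\<forall>u\<in>#image_mset (\<lambda>r. 1 / (w - r)) R. u \<in> D"
      by auto
  qed (use assms(3) in \<open>simp_all add: D_def\<close>)
  then show ?thesis
    using that by (auto simp: D_def scaleR_conv_of_real)
qed

definition polar_deriv :: "nat \<Rightarrow> 'a::idom \<Rightarrow> 'a poly \<Rightarrow> 'a poly" where
  "polar_deriv n v p = smult (of_nat n) p + [:v, -1:] * pderiv p"

theorem stable1_polar_deriv:
  assumes "stable1 p" "degree p \<le> n" "n > 0" "Im v > 0"
  shows "stable1 (polar_deriv n v p)"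
proof -
  obtain R where R: "size R = degree p" "p = smult (lead_coeff p) (\<Prod>x\<in>#R. [:-x, 1:])"
    and roots: "\<forall>r\<in>#R. Im r \<le> 0"
    using stable1_factorization[OF assms(1)] by metis
  define P where "P = (\<Prod>x\<in>#R. [:-x, 1:])"
  have "poly (polar_deriv n v p) w \<noteq> 0" if w: "Im w > 0" for w
  proof
    assume zero: "poly (polar_deriv n v p) w = 0"
    define S where "S = (\<Sum>r\<in>#R. 1 / (w - r))"
    have "\<forall>r\<in>#R. w \<noteq> r"
      using roots w by auto
    then have dP: "poly (pderiv P) w = poly P w * S"
      unfolding P_def S_def by (rule poly_pderiv_prod_linear_factors)
    have "lead_coeff p * poly P w = poly p w"
      by (subst (2) R(2)) (simp add: P_def)
    then have nonzero: "lead_coeff p \<noteq> 0" "poly P w \<noteq> 0"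
      using assms(1) w by (auto simp: stable1_iff_nonvanishing)
    have "poly (polar_deriv n v p) w = lead_coeff p * poly P w * (of_nat n - (w - v) * S)"
      by (subst R(2)) (simp add: polar_deriv_def P_def[symmetric] pderiv_smult dP algebra_simps)
    then have nS: "of_nat n = (w - v) * S"
      using zero nonzero by simp
    have "size R \<le> n"
      using R(1) assms(2) by simp
    then obtain u where u: "Im w * (cmod u)\<^sup>2 + Im u \<le> 0" "S = of_nat n * u"
      unfolding S_def by (rule sum_inverse_in_scaled_lower_tangent_disk[OF w roots])
    \<comment> \<open>hence \<open>1 / (w - v) = S / n\<close> lies in the disk, which \<open>Im (w - v) < Im w\<close> forbids\<close>
    have "of_nat n * ((w - v) * u) = of_nat n * 1"
      using nS u(2) by (simp add: mult_ac)
    then have inv: "(w - v) * u = 1"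
      using assms(3) by simp
    then have "w - v \<noteq> 0"
      by auto
    moreover from this inv have "u = 1 / (w - v)"
      by (simp add: field_simps)
    ultimately have "Im w \<le> Im (w - v)"
      using u(1) by (simp add: inverse_in_lower_tangent_disk_iff)
    then show False
      using assms(4) by simp
  qed
  then show ?thesis
    by (simp add: stable1_iff_nonvanishing)
qed

section \<open>A Grace-type theorem\<close>

lemma coeff_polar_deriv:
  "coeff (polar_deriv n v p) j =
     of_nat n * coeff p j + v * of_nat (Suc j) * coeff p (Suc j) - of_nat j * coeff p j"
  by (cases j) (simp_all add: polar_deriv_def coeff_pderiv algebra_simps)

lemma polar_deriv_binom_poly:
  "polar_deriv (Suc n) (-a) (binom_poly (Suc n) t) =
     smult (of_nat (Suc n)) (binom_poly n (\<lambda>k. t (Suc k) - a * t k))"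
proof (rule poly_eqI)
  fix j
  define N where "N = Suc n"
  show "coeff (polar_deriv (Suc n) (-a) (binom_poly (Suc n) t)) j =
        coeff (smult (of_nat (Suc n)) (binom_poly n (\<lambda>k. t (Suc k) - a * t k))) j"
  proof (cases "j \<le> n")
    case True
    have absorb: "of_nat (N - j) * of_nat (N choose j) = (of_nat N * of_nat (n choose j) :: 'a)"
      using binomial_absorb_comp[of N j] unfolding N_def by (metis of_nat_mult diff_Suc_1)
    have shift: "of_nat (Suc j) * of_nat (N choose Suc j) = (of_nat N * of_nat (n choose j) :: 'a)"
      using Suc_times_binomial_eq[of n j] unfolding N_def by (metis of_nat_mult mult.commute)
    have "coeff (polar_deriv N (-a) (binom_poly N t)) j =
        of_nat (N - j) * of_nat (N choose j) * t (Suc (n - j))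
        - a * (of_nat (Suc j) * of_nat (N choose Suc j)) * t (n - j)"
      using True by (simp add: coeff_polar_deriv coeff_binom_poly N_def Suc_diff_le of_nat_diff algebra_simps)
    also have "\<dots> = of_nat N * (of_nat (n choose j) * (t (Suc (n - j)) - a * t (n - j)))"
      unfolding absorb shift by (simp add: algebra_simps)
    finally show ?thesis
      using True by (simp add: coeff_binom_poly N_def)
  next
    case False
    then show ?thesis
      by (cases "j = Suc n") (simp_all add: coeff_polar_deriv coeff_binom_poly)
  qed
qed

lemma coeff_pairing_linear_factor:
  fixes p :: "'a::comm_ring_1 poly"
  assumes "degree p \<le> n"
  shows "coeff_pairing (Suc n) ([:-a, 1:] * p) t = coeff_pairing n p (\<lambda>k. t (Suc k) - a * t k)"
proof -
  have "coeff ([:-a, 1:] * p) k = (if k = 0 then 0 else coeff p (k - 1)) - a * coeff p k" for k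
    by (cases k) simp_all
  then have "coeff_pairing (Suc n) ([:-a, 1:] * p) t
      = (\<Sum>k\<le>Suc n. (if k = 0 then 0 else coeff p (k - 1)) * t k) - (\<Sum>k\<le>Suc n. a * coeff p k * t k)"
    by (simp add: coeff_pairing_def left_diff_distrib sum_subtractf)
  also have "(\<Sum>k\<le>Suc n. (if k = 0 then 0 else coeff p (k - 1)) * t k) = (\<Sum>k\<le>n. coeff p k * t (Suc k))"
    by (subst sum.atMost_Suc_shift) simp
  also have "(\<Sum>k\<le>Suc n. a * coeff p k * t k) = (\<Sum>k\<le>n. a * coeff p k * t k)"
    using assms by (simp add: coeff_eq_0)
  finally show ?thesis
    by (simp add: coeff_pairing_def right_diff_distrib sum_subtractf mult_ac)
qed

theorem grace_coeff_pairing_nonzero: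
  fixes t :: "nat \<Rightarrow> complex"
  assumes "size A = n" "\<forall>a\<in>#A. Im a < 0" "stable1 (binom_poly n t)"
  shows "coeff_pairing n (\<Prod>a\<in>#A. [:-a, 1:]) t \<noteq> 0"
  using assms
proof (induction n arbitrary: A t)
  case 0
  then show ?case
    by (auto simp: coeff_pairing_def binom_poly_def stable1_def)
next
  case (Suc n)
  then obtain a A' where A: "A = add_mset a A'" "size A' = n"
    by (metis size_eq_Suc_imp_eq_union size_add_mset nat.inject)
  have "Im (-a) > 0"
    using Suc.prems(2) A by simp
  then have "stable1 (polar_deriv (Suc n) (-a) (binom_poly (Suc n) t))"
    using stable1_polar_deriv[OF Suc.prems(3) degree_binom_poly_le] by simp
  then have "stable1 (binom_poly n (\<lambda>k. t (Suc k) - a * t k))"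
    by (simp add: polar_deriv_binom_poly stable1_smult_iff)
  then have "coeff_pairing n (\<Prod>x\<in>#A'. [:-x, 1:]) (\<lambda>k. t (Suc k) - a * t k) \<noteq> 0"
    using Suc.IH[of A'] Suc.prems(2) A by auto
  then show ?case
    using A coeff_pairing_linear_factor[of "\<Prod>x\<in>#A'. [:-x, 1:]" n a t]
      degree_prod_linear_factors_le[of A'] by simp
qed

section \<open>Limits of stable polynomials\<close>

definition coeffwise_limit :: "(nat \<Rightarrow> 'a::real_normed_field poly) \<Rightarrow> 'a poly \<Rightarrow> bool" where
  "coeffwise_limit p p0 \<longleftrightarrow> (\<forall>k. (\<lambda>m. coeff (p m) k) \<longlonglongrightarrow> coeff p0 k)"

named_theorems coeffwise_limit_intros

lemma coeffwise_limit_const [coeffwise_limit_intros]: "coeffwise_limit (\<lambda>m. p) p"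
  by (simp add: coeffwise_limit_def)

lemma coeffwise_limit_pCons [coeffwise_limit_intros]:
  assumes "a \<longlonglongrightarrow> a0" "coeffwise_limit p p0"
  shows "coeffwise_limit (\<lambda>m. pCons (a m) (p m)) (pCons a0 p0)"
  using assms unfolding coeffwise_limit_def by (auto simp: coeff_pCons split: nat.split)

lemma coeffwise_limit_mult [coeffwise_limit_intros]:
  assumes "coeffwise_limit p p0" "coeffwise_limit q q0"
  shows "coeffwise_limit (\<lambda>m. p m * q m) (p0 * q0)"
  using assms unfolding coeffwise_limit_def coeff_mult by (intro allI tendsto_sum tendsto_mult) auto

lemma coeffwise_limit_smult [coeffwise_limit_intros]:
  assumes "coeffwise_limit p p0"
  shows "coeffwise_limit (\<lambda>m. smult c (p m)) (smult c p0)"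
  using assms unfolding coeffwise_limit_def by (auto intro: tendsto_mult)

lemma coeffwise_limit_power [coeffwise_limit_intros]:
  assumes "coeffwise_limit p p0"
  shows "coeffwise_limit (\<lambda>m. p m ^ j) (p0 ^ j)"
  by (induction j) (simp_all add: coeffwise_limit_const coeffwise_limit_mult[OF assms])

lemma coeffwise_limit_prod_mset [coeffwise_limit_intros]:
  assumes "\<And>x. x \<in># R \<Longrightarrow> coeffwise_limit (\<lambda>m. p m x) (p0 x)"
  shows "coeffwise_limit (\<lambda>m. \<Prod>x\<in>#R. p m x) (\<Prod>x\<in>#R. p0 x)"
  using assms by (induction R) (simp_all add: coeffwise_limit_const coeffwise_limit_mult)

lemma coeffwise_limit_perturbed_factorization:
  fixes \<epsilon> :: "nat \<Rightarrow> complex"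
  assumes "\<epsilon> \<longlonglongrightarrow> 0"
  shows "coeffwise_limit
    (\<lambda>m. smult l (\<Prod>x\<in>#R. [:-(x - \<i> * \<epsilon> m), 1:]) * [:1 + \<i> * \<epsilon> m, \<epsilon> m:] ^ d)
    (smult l (\<Prod>x\<in>#R. [:-x, 1:]))"
proof -
  have "coeffwise_limit
      (\<lambda>m. smult l (\<Prod>x\<in>#R. [:-(x - \<i> * \<epsilon> m), 1:]) * [:1 + \<i> * \<epsilon> m, \<epsilon> m:] ^ d)
      (smult l (\<Prod>x\<in>#R. [:-(x - \<i> * 0), 1:]) * [:1 + \<i> * 0, 0:] ^ d)"
    by (intro coeffwise_limit_intros tendsto_intros assms)
  then show ?thesis
    by (simp add: one_pCons[symmetric])
qed

lemma prod_shifted_and_escaping_roots: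
  fixes e :: complex
  assumes "e \<noteq> 0"
  shows "smult (l * e ^ d) (\<Prod>b\<in>#image_mset (\<lambda>x. x - \<i> * e) R + replicate_mset d (- 1 / e - \<i>). [:-b, 1:]) =
    smult l (\<Prod>x\<in>#R. [:-(x - \<i> * e), 1:]) * [:1 + \<i> * e, e:] ^ d"
proof -
  have "[:1 + \<i> * e, e:] = smult e [:-(- 1 / e - \<i>), 1:]"
    using assms by (simp add: field_simps)
  then have "[:1 + \<i> * e, e:] ^ d = smult (e ^ d) ([:-(- 1 / e - \<i>), 1:] ^ d)"
    by (simp only: smult_power)
  moreover have "(\<Prod>b\<in>#image_mset (\<lambda>x. x - \<i> * e) R + replicate_mset d (- 1 / e - \<i>). [:-b, 1:]) =
      (\<Prod>x\<in>#R. [:-(x - \<i> * e), 1:]) * [:-(- 1 / e - \<i>), 1:] ^ d"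
    by (simp add: image_mset.compositionality o_def)
  ultimately show ?thesis
    by (simp only: mult_smult_left mult_smult_right smult_smult mult.commute)
qed

lemma stable1_approx_by_lower_root_products:
  assumes "stable1 f" "degree f \<le> n"
  obtains c :: "nat \<Rightarrow> complex" and B :: "nat \<Rightarrow> complex multiset"
  where "\<And>m. c m \<noteq> 0" "\<And>m. size (B m) = n" "\<And>m. \<forall>b\<in>#B m. Im b < 0"
    "coeffwise_limit (\<lambda>m. smult (c m) (\<Prod>b\<in>#B m. [:-b, 1:])) f"
proof -
  obtain R where R: "size R = degree f" "f = smult (lead_coeff f) (\<Prod>x\<in>#R. [:-x, 1:])"
    and roots: "\<forall>r\<in>#R. Im r \<le> 0"
    using stable1_factorization[OF assms(1)] by metis
  define d where "d = n - degree f"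
  define \<epsilon> where "\<epsilon> m = complex_of_real (inverse (real (Suc m)))" for m
  have \<epsilon>_lim: "\<epsilon> \<longlonglongrightarrow> 0"
    using tendsto_of_real[OF LIMSEQ_inverse_real_of_nat] unfolding \<epsilon>_def of_real_0 .
  have \<epsilon>_nz: "\<epsilon> m \<noteq> 0" for m
    unfolding \<epsilon>_def of_real_eq_0_iff by simp
  \<comment> \<open>push the roots of \<open>f\<close> down by \<open>\<i> \<epsilon>\<close>, and add \<open>d\<close> roots \<open>-1/\<epsilon> - \<i>\<close> escaping to infinity\<close>
  define B where "B m = image_mset (\<lambda>x. x - \<i> * \<epsilon> m) R + replicate_mset d (- 1 / \<epsilon> m - \<i>)" for m
  define c where "c m = lead_coeff f * \<epsilon> m ^ d" for m
  have approx: "smult (c m) (\<Prod>b\<in>#B m. [:-b, 1:]) =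
      smult (lead_coeff f) (\<Prod>x\<in>#R. [:-(x - \<i> * \<epsilon> m), 1:]) * [:1 + \<i> * \<epsilon> m, \<epsilon> m:] ^ d" for m
    unfolding B_def c_def by (rule prod_shifted_and_escaping_roots[OF \<epsilon>_nz])
  have "coeffwise_limit (\<lambda>m. smult (c m) (\<Prod>b\<in>#B m. [:-b, 1:])) f"
    unfolding approx
    using coeffwise_limit_perturbed_factorization[OF \<epsilon>_lim, where l = "lead_coeff f" and R = R and d = d]
    unfolding R(2)[symmetric] .
  moreover have "c m \<noteq> 0" for m
    using assms(1) \<epsilon>_nz by (simp add: c_def stable1_def)
  moreover have "size (B m) = n" for m
    using R(1) assms(2) by (simp add: B_def d_def)
  moreover have "\<forall>b\<in>#B m. Im b < 0" for m
  proof -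
    have "Im (\<i> * \<epsilon> m) > 0" "Im (- 1 / \<epsilon> m - \<i>) < 0"
      by (simp_all add: \<epsilon>_def)
    then show ?thesis
      using roots by (auto simp: B_def)
  qed
  ultimately show ?thesis
    using that by blast
qed

lemma uniform_limit_const_seq:
  assumes "c \<longlonglongrightarrow> c0"
  shows "uniform_limit K (\<lambda>m z. c m) (\<lambda>z. c0) sequentially"
proof (rule uniform_limitI)
  fix e :: real
  assume "e > 0"
  then have "eventually (\<lambda>m. dist (c m) c0 < e) sequentially"
    using assms by (simp add: tendsto_iff)
  then show "eventually (\<lambda>m. \<forall>z\<in>K. dist (c m) c0 < e) sequentially"
    by simp
qed

lemma uniform_limit_lincomb:
  fixes u :: "nat \<Rightarrow> 'b::topological_space \<Rightarrow> complex"
  assumes "finite A" "compact K" "\<And>k. continuous_on K (u k)" "\<And>k. (\<lambda>m. c m k) \<longlonglongrightarrow> c0 k"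
  shows "uniform_limit K (\<lambda>m z. \<Sum>k\<in>A. c m k * u k z) (\<lambda>z. \<Sum>k\<in>A. c0 k * u k z) sequentially"
  using assms(1)
proof (induction A rule: finite_induct)
  case empty
  then show ?case by (simp add: uniform_limit_const)
next
  case (insert x F)
  have "bounded (u x ` K)"
    by (rule compact_imp_bounded[OF compact_continuous_image[OF assms(3) assms(2)]])
  moreover have "bounded ((\<lambda>z. c0 x) ` K)"
    by (rule bounded_subset[of "{c0 x}"]) auto
  ultimately have "uniform_limit K (\<lambda>m z. c m x * u x z) (\<lambda>z. c0 x * u x z) sequentially"
    by (intro uniform_lim_mult uniform_limit_const_seq assms(4) uniform_limit_const)
  then show ?case
    using insert by (simp add: uniform_limit_add)
qed

lemma uniform_limit_poly_linear_op_Cn: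
  assumes lin: "linear_op_Cn n T" and "\<And>m. degree (g m) \<le> n" "degree f \<le> n"
    and "coeffwise_limit g f" "compact K"
  shows "uniform_limit K (\<lambda>m. poly (T (g m))) (poly (T f)) sequentially"
proof -
  have expand: "poly (T h) = (\<lambda>z. \<Sum>k\<le>n. coeff h k * poly (T (monom 1 k)) z)" if "degree h \<le> n" for h
    using poly_linear_op_Cn[OF lin that] by (auto simp: coeff_pairing_def)
  have "uniform_limit K (\<lambda>m z. \<Sum>k\<le>n. coeff (g m) k * poly (T (monom 1 k)) z)
      (\<lambda>z. \<Sum>k\<le>n. coeff f k * poly (T (monom 1 k)) z) sequentially"
    using assms(4,5) unfolding coeffwise_limit_def
    by (intro uniform_limit_lincomb) (auto intro: continuous_intros)
  then show ?thesis
    by (simp only: expand assms(2,3))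
qed

lemma stable1_or_zero_if_uniform_limit:
  fixes q :: "nat \<Rightarrow> complex poly"
  assumes "\<And>m. stable1 (q m)"
    and "\<And>K. compact K \<Longrightarrow> K \<subseteq> {z. Im z > 0} \<Longrightarrow> uniform_limit K (\<lambda>m. poly (q m)) (poly p) sequentially"
  shows "stable1 p \<or> p = 0"
proof (cases "poly p constant_on {z. Im z > 0}")
  case True
  then obtain c where c: "\<And>z. Im z > 0 \<Longrightarrow> poly p z = c"
    unfolding constant_on_def by auto
  have "c \<noteq> 0 \<or> p = 0"
  proof (rule ccontr)
    assume "\<not> (c \<noteq> 0 \<or> p = 0)"
    then have "{z. Im z > 0} \<subseteq> {z. poly p z = 0}" "p \<noteq> 0"
      using c by auto
    then have "finite {z. Im z > 0}"
      using poly_roots_finite finite_subset by blast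
    then have "{z. Im z > 0} = {}"
      using finite_imp_not_open open_halfspace_Im_gt by blast
    then show False
      by (metis empty_iff imaginary_unit.sel(2) mem_Collect_eq zero_less_one)
  qed
  then show ?thesis
    using c by (auto simp: stable1_iff_nonvanishing)
next
  case False
  have "poly p z \<noteq> 0" if "Im z > 0" for z
  proof (rule Hurwitz_no_zeros[of "{z. Im z > 0}" "\<lambda>m. poly (q m)" "poly p"])
    show "connected {z. Im z > 0}"
      by (rule convex_connected[OF convex_halfspace_Im_gt])
    show "poly (q m) holomorphic_on {z. Im z > 0}" "poly p holomorphic_on {z. Im z > 0}" for m
      by (intro holomorphic_intros)+
  qed (use assms False that in \<open>auto simp: open_halfspace_Im_gt stable1_iff_nonvanishing\<close>)
  then show ?thesis
    by (simp add: stable1_iff_nonvanishing)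
qed

section \<open>Operators with stable symbol preserve stability\<close>

lemma stable1_linear_op_root_product:
  assumes lin: "linear_op_Cn n T" and "stable2 (symbol n T)" "size B = n" "\<forall>b\<in>#B. Im b < 0"
  shows "stable1 (T (\<Prod>b\<in>#B. [:-b, 1:]))"
proof -
  have "poly (T (\<Prod>b\<in>#B. [:-b, 1:])) z \<noteq> 0" if "Im z > 0" for z
  proof -
    have "stable1 (binom_poly n (\<lambda>k. poly (T (monom 1 k)) z))"
      using assms(2) that unfolding stable2_def stable1_iff_nonvanishing eval2_symbol by blast
    then show ?thesis
      using grace_coeff_pairing_nonzero[OF assms(3,4)] degree_prod_linear_factors_le[of B] assms(3)
      by (simp add: poly_linear_op_Cn[OF lin])
  qed
  then show ?thesis
    by (simp add: stable1_iff_nonvanishing)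
qed

lemma preserves_stability_if_stable_symbol:
  assumes lin: "linear_op_Cn n T" and st: "stable2 (symbol n T)"
  shows "preserves_stability n T"
  unfolding preserves_stability_def
proof (intro allI impI, elim conjE)
  fix f
  assume "stable1 f" "degree f \<le> n"
  then obtain c B where c: "\<And>m. c m \<noteq> 0" and B: "\<And>m. size (B m) = n" "\<And>m. \<forall>b\<in>#B m. Im b < 0"
    and lim: "coeffwise_limit (\<lambda>m. smult (c m) (\<Prod>b\<in>#B m. [:-b, 1:])) f"
    by (rule stable1_approx_by_lower_root_products) blast
  have deg: "degree (\<Prod>b\<in>#B m. [:-b, 1:]) \<le> n" for m
    using degree_prod_linear_factors_le[of "B m"] B(1) by simp
  show "stable1 (T f) \<or> T f = 0"
  proof (rule stable1_or_zero_if_uniform_limit)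
    show "stable1 (T (smult (c m) (\<Prod>b\<in>#B m. [:-b, 1:])))" for m
      using stable1_linear_op_root_product[OF lin st B(1,2)] c
      by (simp add: linear_op_Cn_smult[OF lin deg] stable1_smult_iff)
    show "uniform_limit K (\<lambda>m. poly (T (smult (c m) (\<Prod>b\<in>#B m. [:-b, 1:])))) (poly (T f)) sequentially"
      if "compact K" for K
      using deg \<open>degree f \<le> n\<close> lim that
      by (intro uniform_limit_poly_linear_op_Cn[OF lin]) (auto intro: order.trans[OF degree_smult_le])
  qed
qed

section \<open>Stability preservers have rank one or a stable symbol\<close>

lemma norm_poly_le_coeff_sum:
  fixes h :: "complex poly"
  assumes "degree h \<le> n"
  shows "cmod (poly h z) \<le> (\<Sum>k\<le>n. cmod (coeff h k)) * (1 + cmod z) ^ n"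
proof -
  have "poly h z = (\<Sum>k\<le>n. coeff h k * z ^ k)"
    by (subst poly_as_sum_of_monoms'[OF assms, symmetric]) (simp add: poly_sum poly_monom)
  then have "cmod (poly h z) \<le> (\<Sum>k\<le>n. cmod (coeff h k) * cmod z ^ k)"
    by (metis (no_types, lifting) norm_mult norm_power norm_sum sum.cong)
  also have "\<dots> \<le> (\<Sum>k\<le>n. cmod (coeff h k) * (1 + cmod z) ^ n)"
  proof (intro sum_mono mult_left_mono)
    fix k
    assume "k \<in> {..n}"
    have "cmod z ^ k \<le> (1 + cmod z) ^ k"
      by (intro power_mono) auto
    also have "\<dots> \<le> (1 + cmod z) ^ n"
      using \<open>k \<in> {..n}\<close> by (intro power_increasing) auto
    finally show "cmod z ^ k \<le> (1 + cmod z) ^ n" .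
  qed auto
  finally show ?thesis
    by (simp add: sum_distrib_right)
qed

lemma poly_bounded_by_linear_power:
  fixes h :: "complex poly"
  assumes "Im w > 0" "degree h \<le> n"
  obtains C where "C \<ge> 0" "\<And>z. Im z > 0 \<Longrightarrow> cmod (poly h z) \<le> C * cmod (z + w) ^ n"
proof -
  define M where "M = (\<Sum>k\<le>n. cmod (coeff h k))"
  define K where "K = 1 + (1 + cmod w) / Im w"
  have "M \<ge> 0" "K \<ge> 0"
    using assms(1) by (simp_all add: M_def K_def sum_nonneg add_nonneg_nonneg)
  have "cmod (poly h z) \<le> M * K ^ n * cmod (z + w) ^ n" if "Im z > 0" for z
  proof -
    have "Im w \<le> cmod (z + w)"
      using that abs_Im_le_cmod[of "z + w"] by simp
    then have "(1 + cmod w) / Im w * Im w \<le> (1 + cmod w) / Im w * cmod (z + w)"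
      using assms(1) by (intro mult_left_mono) auto
    then have "1 + cmod w \<le> (1 + cmod w) / Im w * cmod (z + w)"
      using assms(1) by simp
    moreover have "cmod z \<le> cmod (z + w) + cmod w"
      by (metis add_diff_cancel_right' norm_triangle_ineq4)
    moreover have "K * cmod (z + w) = cmod (z + w) + (1 + cmod w) / Im w * cmod (z + w)"
      by (simp add: K_def distrib_right)
    ultimately have "1 + cmod z \<le> K * cmod (z + w)"
      by linarith
    then have "(1 + cmod z) ^ n \<le> (K * cmod (z + w)) ^ n"
      by (intro power_mono) auto
    then show ?thesis
      using norm_poly_le_coeff_sum[OF assms(2), of z] \<open>M \<ge> 0\<close>
      by (simp add: M_def[symmetric] power_mult_distrib mult.assoc order_trans[OF _ mult_left_mono])
  qed
  then show ?thesis
    using that[of "M * K ^ n"] \<open>M \<ge> 0\<close> \<open>K \<ge> 0\<close> by simp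
qed

lemma stable1_linear_power_perturb:
  assumes "Im w > 0" "degree h \<le> n"
  obtains e where "e \<noteq> 0" "stable1 ([:w, 1:] ^ n + smult e h)"
proof -
  obtain C where C: "C \<ge> 0" "\<And>z. Im z > 0 \<Longrightarrow> cmod (poly h z) \<le> C * cmod (z + w) ^ n"
    using poly_bounded_by_linear_power[OF assms] by blast
  define e where "e = complex_of_real (1 / (C + 1))"
  have "poly ([:w, 1:] ^ n + smult e h) z \<noteq> 0" if z: "Im z > 0" for z
  proof
    assume "poly ([:w, 1:] ^ n + smult e h) z = 0"
    then have "(z + w) ^ n = - e * poly h z"
      by (simp add: add.commute eq_neg_iff_add_eq_0)
    then have "cmod (z + w) ^ n = cmod e * cmod (poly h z)"
      by (metis norm_minus_cancel norm_mult norm_power)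
    also have "\<dots> = cmod (poly h z) / (C + 1)"
      unfolding e_def norm_of_real using C(1) by simp
    also have "\<dots> \<le> C / (C + 1) * cmod (z + w) ^ n"
      using C z by (simp add: divide_right_mono)
    also have "\<dots> < cmod (z + w) ^ n"
    proof -
      have "Im (z + w) > 0"
        using z assms(1) by simp
      then have "cmod (z + w) ^ n > 0"
        by (auto simp: complex_eq_iff)
      then show ?thesis
        using C(1) by (simp add: field_simps)
    qed
    finally show False
      by simp
  qed
  moreover have "e \<noteq> 0"
    unfolding e_def of_real_eq_0_iff using C(1) by simp
  ultimately show ?thesis
    using that by (simp add: stable1_iff_nonvanishing)
qed

lemma images_stable_if_linear_power_in_kernel:
  assumes lin: "linear_op_Cn n T" and ps: "preserves_stability n T"
    and w: "Im w > 0" and ker: "T ([:w, 1:] ^ n) = 0" and h: "degree h \<le> n"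
  shows "stable1 (T h) \<or> T h = 0"
proof -
  obtain e where e: "e \<noteq> 0" and st: "stable1 ([:w, 1:] ^ n + smult e h)"
    using stable1_linear_power_perturb[OF w h] .
  have deg: "degree ([:w, 1:] ^ n + smult e h) \<le> n"
    using h by (intro degree_add_le) (auto simp: degree_linear_power intro: order.trans[OF degree_smult_le])
  have "T ([:w, 1:] ^ n + smult e h) = smult e (T h)"
    using h ker by (simp add: linear_op_Cn_add[OF lin] linear_op_Cn_smult[OF lin] degree_linear_power
      order.trans[OF degree_smult_le])
  then show ?thesis
    using ps st deg e unfolding preserves_stability_def by (auto simp: stable1_smult_iff)
qed

lemma linear_op_Cn_eq_smult_if_images_stable:
  assumes lin: "linear_op_Cn n T" and st: "\<And>h. degree h \<le> n \<Longrightarrow> stable1 (T h) \<or> T h = 0"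
    and h0: "degree h0 \<le> n" "T h0 \<noteq> 0" and h: "degree h \<le> n"
  shows "T h = smult (poly (T h) \<i> / poly (T h0) \<i>) (T h0)"
proof -
  have "stable1 (T h0)"
    using st[OF h0(1)] h0(2) by simp
  then have Ti: "poly (T h0) \<i> \<noteq> 0"
    by (simp add: stable1_iff_nonvanishing)
  define c where "c = poly (T h) \<i> / poly (T h0) \<i>"
  define d where "d = smult 1 h + smult (- c) h0"
  have "degree d \<le> n"
    unfolding d_def using h h0(1) by (intro degree_add_le) (auto intro: order.trans[OF degree_smult_le])
  have Td: "T d = smult 1 (T h) + smult (- c) (T h0)"
    unfolding d_def using lin h h0(1) unfolding linear_op_Cn_def by blast
  have "poly (T d) \<i> = 0"
    unfolding Td c_def using Ti by simp
  then have "\<not> stable1 (T d)"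
    by (metis stable1_iff_nonvanishing imaginary_unit.sel(2) zero_less_one)
  then have "T d = 0"
    using st[OF \<open>degree d \<le> n\<close>] by blast
  then show ?thesis
    unfolding Td c_def[symmetric] by (simp add: algebra_simps)
qed

lemma rank_one_if_images_stable:
  assumes lin: "linear_op_Cn n T" and st: "\<And>h. degree h \<le> n \<Longrightarrow> stable1 (T h) \<or> T h = 0"
  shows "\<exists>\<alpha> P. linear_fun_Cn n \<alpha> \<and> stable1 P \<and> (\<forall>f. degree f \<le> n \<longrightarrow> T f = smult (\<alpha> f) P)"
proof (cases "\<exists>h0. degree h0 \<le> n \<and> T h0 \<noteq> 0")
  case False
  then have "\<forall>f. degree f \<le> n \<longrightarrow> T f = smult 0 1"
    by simp
  moreover have "linear_fun_Cn n (\<lambda>_. 0)" "stable1 1"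
    by (simp_all add: linear_fun_Cn_def stable1_def)
  ultimately show ?thesis
    by blast
next
  case True
  then obtain h0 where h0: "degree h0 \<le> n" "T h0 \<noteq> 0"
    by blast
  define \<alpha> where "\<alpha> h = poly (T h) \<i> / poly (T h0) \<i>" for h
  have "linear_fun_Cn n \<alpha>"
    unfolding linear_fun_Cn_def
  proof (intro allI impI)
    fix f g :: "complex poly" and a b :: complex
    assume "degree f \<le> n" "degree g \<le> n"
    then have "T (smult a f + smult b g) = smult a (T f) + smult b (T g)"
      using lin unfolding linear_op_Cn_def by blast
    then show "\<alpha> (smult a f + smult b g) = a * \<alpha> f + b * \<alpha> g"
      by (simp add: \<alpha>_def add_divide_distrib)
  qed
  moreover have "stable1 (T h0)"
    using st[OF h0(1)] h0(2) by simp
  ultimately show ?thesis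
    using linear_op_Cn_eq_smult_if_images_stable[OF lin st h0] unfolding \<alpha>_def by blast
qed

lemma stable_symbol_if_preserves_stability:
  assumes lin: "linear_op_Cn n T" and ps: "preserves_stability n T"
    and nz: "\<And>w. Im w > 0 \<Longrightarrow> T ([:w, 1:] ^ n) \<noteq> 0"
  shows "stable2 (symbol n T)"
proof -
  have nonvanishing: "eval2 (symbol n T) z w \<noteq> 0" if "Im z > 0" "Im w > 0" for z w
  proof -
    have "stable1 ([:w, 1:] ^ n) \<and> degree ([:w, 1:] ^ n) \<le> n"
      using stable1_linear_power[OF that(2)] by (simp add: degree_linear_power)
    then have "stable1 (T ([:w, 1:] ^ n))"
      using ps nz[OF that(2)] unfolding preserves_stability_def by blast
    then show ?thesis
      using that(1) by (simp add: stable1_iff_nonvanishing poly_linear_op_Cn_linear_power[OF lin, symmetric])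
  qed
  moreover have "symbol n T \<noteq> 0"
    using nonvanishing[of \<i> \<i>] by (auto simp: eval2_def)
  ultimately show ?thesis
    unfolding stable2_def by blast
qed

lemma preserves_stability_rank_one:
  assumes "stable1 P" "\<forall>f. degree f \<le> n \<longrightarrow> T f = smult (\<alpha> f) P"
  shows "preserves_stability n T"
  using assms unfolding preserves_stability_def by (auto simp: stable1_smult_iff)

theorem mainTheorem3:
  fixes n :: nat and T :: "complex poly \<Rightarrow> complex poly"
  assumes "linear_op_Cn n T"
  shows "preserves_stability n T \<longleftrightarrow>
    ((\<exists>\<alpha> P. linear_fun_Cn n \<alpha> \<and> stable1 P \<and> (\<forall>f. degree f \<le> n \<longrightarrow> T f = smult (\<alpha> f) P))
     \<or> stable2 (symbol n T))"
proof
  assume ps: "preserves_stability n T"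
  show "(\<exists>\<alpha> P. linear_fun_Cn n \<alpha> \<and> stable1 P \<and> (\<forall>f. degree f \<le> n \<longrightarrow> T f = smult (\<alpha> f) P))
     \<or> stable2 (symbol n T)"
  proof (cases "\<exists>w. Im w > 0 \<and> T ([:w, 1:] ^ n) = 0")
    case True
    then obtain w where "Im w > 0" "T ([:w, 1:] ^ n) = 0"
      by blast
    then show ?thesis
      using rank_one_if_images_stable[OF assms] images_stable_if_linear_power_in_kernel[OF assms ps]
      by blast
  next
    case False
    then show ?thesis
      using stable_symbol_if_preserves_stability[OF assms ps] by blast
  qed
next
  assume "(\<exists>\<alpha> P. linear_fun_Cn n \<alpha> \<and> stable1 P \<and> (\<forall>f. degree f \<le> n \<longrightarrow> T f = smult (\<alpha> f) P))
     \<or> stable2 (symbol n T)"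
  then show "preserves_stability n T"
    using preserves_stability_rank_one preserves_stability_if_stable_symbol[OF assms] by blast
qed

end
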